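(* Let $x,y\in\mathbb{B}^2\setminus\{0\}$ be such that $0,x,y$ are noncollinear. Let $t_x=\sqrt{\frac{1}{|x|^2}-1}$ and $t_y=\sqrt{\frac{1}{|y|^2}-1}$, so that $0$ is the inversion of $x$ in the circle $S^1(x^*,t_x)$ and the inversion of $y$ in the circle $S^1(y^*,t_y)$. Then $S^1(x^*,t_x)$ is orthogonal to $S^1(y^*,t_y)$ if and only if $\cos\angle x0y=|x||y|$.
   Context: $\mathbb{B}^2$ is the unit disk; $S^1(c,r)$ the circle with centre $c$ and radius $r$; $x^*=x/|x|^2$; $\angle x0y$ is the angle at $0$ between the segments $[0,x]$ and $[0,y]$. *)

theory Defs
  imports "HOL-Analysis.Analysis"
begin

definition inv_pt :: "real^2 \<Rightarrow> real^2" where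
  "inv_pt x = (1 / (norm x)^2) *\<^sub>R x"

definition angle0 :: "real^2 \<Rightarrow> real^2 \<Rightarrow> real" where
  "angle0 x y = arccos ((x \<bullet> y) / (norm x * norm y))"

definition circle :: "real^2 \<Rightarrow> real \<Rightarrow> (real^2) set" where
  "circle c r = sphere c r"

definition circles_orthogonal :: "real^2 \<Rightarrow> real \<Rightarrow> real^2 \<Rightarrow> real \<Rightarrow> bool" where
  "circles_orthogonal a r b s \<longleftrightarrow> 0 < r \<and> 0 < s \<and>
     (\<exists>z \<in> circle a r \<inter> circle b s. (z - a) \<bullet> (z - b) = 0)"

end

theory Submission
  imports Defs
begin

text \<open>Two circles are orthogonal exactly when the square of the distance between their centres
  is the sum of the squares of their radii. The inversion centres satisfy
  \<open>|x*|\<^sup>2 = 1/|x|\<^sup>2 = t\<^sub>x\<^sup>2 + 1\<close>, so by the law of cosines this condition reads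
  \<open>x* \<bullet> y* = 1\<close>, i.e. \<open>x \<bullet> y = |x|\<^sup>2|y|\<^sup>2\<close>, i.e. \<open>cos \<angle>x0y = |x||y|\<close>.\<close>

lemma norm_diff_squared:
  fixes u v :: "'a::real_inner"
  shows "(norm (u - v))\<^sup>2 = (norm u)\<^sup>2 + (norm v)\<^sup>2 - 2 * (u \<bullet> v)"
  by (simp add: power2_norm_eq_inner inner_diff inner_commute)

text \<open>If \<open>e\<close> is \<open>d\<close> turned by a right angle, the point
  \<open>a + (r/|d|\<^sup>2)(r d + s e)\<close> lies on both circles and sees the centres at a right angle.\<close>

lemma orthogonal_circles_common_point:
  fixes a d e :: "'a::real_inner"
  assumes de: "d \<bullet> e = 0" and norm_e: "norm e = norm d"
    and d: "(norm d)\<^sup>2 = r\<^sup>2 + s\<^sup>2" "d \<noteq> 0" and rs: "0 \<le> r" "0 \<le> s"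
  obtains z where "norm (z - a) = r" "norm (z - (a + d)) = s" "(z - a) \<bullet> (z - (a + d)) = 0"
proof -
  define D where "D = (norm d)\<^sup>2"
  have D_pos: "D > 0"
    using d(2) by (simp add: D_def)
  have D: "D = r\<^sup>2 + s\<^sup>2" "d \<bullet> d = D" "e \<bullet> e = D" "e \<bullet> d = 0"
    using d(1) de norm_e by (simp_all add: D_def inner_commute flip: power2_norm_eq_inner)
  define z where "z = a + (r / D) *\<^sub>R (r *\<^sub>R d + s *\<^sub>R e)"
  have za: "z - a = (r / D) *\<^sub>R (r *\<^sub>R d + s *\<^sub>R e)"
    by (simp add: z_def)
  have "z - (a + d) = (r * r / D - 1) *\<^sub>R d + (r * s / D) *\<^sub>R e"
    by (simp add: za algebra_simps)
  also have "r * r / D - 1 = - (s * s / D)"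
    using D_pos D(1) by (auto simp: divide_simps power2_eq_square)
  finally have zb: "z - (a + d) = (s / D) *\<^sub>R (r *\<^sub>R e - s *\<^sub>R d)"
    by (simp add: algebra_simps)
  have "(r *\<^sub>R d + s *\<^sub>R e) \<bullet> (r *\<^sub>R d + s *\<^sub>R e) = D * D"
    "(r *\<^sub>R e - s *\<^sub>R d) \<bullet> (r *\<^sub>R e - s *\<^sub>R d) = D * D"
    using D de by (simp_all add: inner_add inner_diff algebra_simps power2_eq_square)
  then have "(norm (z - a))\<^sup>2 = r\<^sup>2" "(norm (z - (a + d)))\<^sup>2 = s\<^sup>2"
    unfolding za zb power2_norm_eq_inner using D_pos by (simp_all add: power2_eq_square)
  then have "norm (z - a) = r" "norm (z - (a + d)) = s"
    using rs by (simp_all add: power2_eq_iff_nonneg)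
  moreover have "(r *\<^sub>R d + s *\<^sub>R e) \<bullet> (r *\<^sub>R e - s *\<^sub>R d) = 0"
    using D de by (simp add: inner_add inner_diff algebra_simps)
  then have "(z - a) \<bullet> (z - (a + d)) = 0"
    by (simp add: za zb)
  ultimately show thesis
    using that by blast
qed

lemma exists_orthogonal_same_norm:
  fixes d :: "real^2"
  obtains e where "d \<bullet> e = 0" "norm e = norm d"
proof
  let ?e = "vector [-(d$2), d$1] :: real^2"
  show "d \<bullet> ?e = 0"
    by (simp add: inner_vec_def sum_2)
  show "norm ?e = norm d"
    by (simp add: norm_eq_sqrt_inner inner_vec_def sum_2 add.commute)
qed

lemma circles_orthogonal_iff:
  assumes "0 < r" "0 < s"
  shows "circles_orthogonal a r b s \<longleftrightarrow> (dist a b)\<^sup>2 = r\<^sup>2 + s\<^sup>2"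
proof
  assume "circles_orthogonal a r b s"
  then obtain z where z: "z \<in> sphere a r" "z \<in> sphere b s" and perp: "(z - a) \<bullet> (z - b) = 0"
    by (auto simp: circles_orthogonal_def circle_def)
  from z have "norm (z - a) = r" "norm (z - b) = s"
    by (simp_all add: dist_norm norm_minus_commute)
  moreover note perp
  moreover have "dist a b = norm ((z - b) - (z - a))"
    by (simp add: dist_norm)
  ultimately show "(dist a b)\<^sup>2 = r\<^sup>2 + s\<^sup>2"
    by (simp only: norm_diff_squared inner_commute)
next
  assume dist: "(dist a b)\<^sup>2 = r\<^sup>2 + s\<^sup>2"
  obtain e where "(b - a) \<bullet> e = 0" "norm e = norm (b - a)"
    using exists_orthogonal_same_norm .
  moreover have "(norm (b - a))\<^sup>2 = r\<^sup>2 + s\<^sup>2" "b - a \<noteq> 0"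
    using dist assms by (auto simp: dist_norm norm_minus_commute)
  ultimately obtain z
    where "norm (z - a) = r" "norm (z - b) = s" "(z - a) \<bullet> (z - b) = 0"
    using assms by (metis orthogonal_circles_common_point add.commute diff_add_cancel less_imp_le)
  then show "circles_orthogonal a r b s"
    using assms by (auto simp: circles_orthogonal_def circle_def dist_norm norm_minus_commute)
qed

lemma norm_inv_pt_squared: "(norm (inv_pt x))\<^sup>2 = 1 / (norm x)\<^sup>2"
  by (simp add: inv_pt_def power2_eq_square)

lemma inner_inv_pt: "inv_pt x \<bullet> inv_pt y = (x \<bullet> y) / ((norm x)\<^sup>2 * (norm y)\<^sup>2)"
  by (simp add: inv_pt_def)

lemma cos_angle0: "cos (angle0 x y) = (x \<bullet> y) / (norm x * norm y)"
proof -
  have "\<bar>x \<bullet> y\<bar> \<le> norm x * norm y"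
    by (rule Cauchy_Schwarz_ineq2)
  then have "\<bar>(x \<bullet> y) / (norm x * norm y)\<bar> \<le> 1"
    by (auto simp: abs_divide divide_le_eq_1)
  then show ?thesis
    by (simp add: angle0_def cos_arccos_abs)
qed

theorem proposition4p34:
  fixes x y :: "real^2"
  assumes "x \<in> ball 0 1 - {0}" and "y \<in> ball 0 1 - {0}"
    and "\<not> collinear {0, x, y}"
  defines "t\<^sub>x \<equiv> sqrt (1 / (norm x)^2 - 1)"
    and "t\<^sub>y \<equiv> sqrt (1 / (norm y)^2 - 1)"
  shows "circles_orthogonal (inv_pt x) t\<^sub>x (inv_pt y) t\<^sub>y
         \<longleftrightarrow> cos (angle0 x y) = norm x * norm y"
proof -
  have x: "0 < norm x" "norm x < 1" and y: "0 < norm y" "norm y < 1"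
    using assms(1,2) by auto
  have "1 / (norm x)\<^sup>2 - 1 > 0" "1 / (norm y)\<^sup>2 - 1 > 0"
    using x y by (simp_all add: field_simps power_less_one_iff)
  then have t: "0 < t\<^sub>x" "0 < t\<^sub>y" "t\<^sub>x\<^sup>2 = 1 / (norm x)\<^sup>2 - 1" "t\<^sub>y\<^sup>2 = 1 / (norm y)\<^sup>2 - 1"
    by (simp_all add: t\<^sub>x_def t\<^sub>y_def)
  have "circles_orthogonal (inv_pt x) t\<^sub>x (inv_pt y) t\<^sub>y \<longleftrightarrow> inv_pt x \<bullet> inv_pt y = 1"
    using t by (simp add: circles_orthogonal_iff dist_norm norm_diff_squared norm_inv_pt_squared)
  also have "\<dots> \<longleftrightarrow> (x \<bullet> y) / (norm x * norm y) = norm x * norm y"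
    using x y by (auto simp: inner_inv_pt field_simps power2_eq_square)
  finally show ?thesis
    by (simp add: cos_angle0)
qed

end
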